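(* Let $c>0$ be a constant, let $\alpha\in[1,2)$, and let $K$ be an origin-symmetric convex body in $\mathbb{R}^n$ such that $$\max\{N(K,tB_2^n),\,N(B_2^n,tK)\}\ \le\ \exp\Big(\frac{cn}{t^\alpha(2-\alpha)}\Big)\qquad\text{for every } t\ge1.$$ Then for every $t\ge1$, $$|K+tB_2^n|^{1/n}\ \le\ 2e^c\,t\,|K|^{1/n}\,\frac{1}{2-\alpha}\,\exp\Big(\frac{c}{t^\alpha(2-\alpha)}\Big).$$
   Context: $B_2^n$ is the Euclidean unit ball, $|\cdot|$ is volume, and $K+tB_2^n$ is the Minkowski sum. For symmetric convex bodies $A,B$, the covering number $N(A,B)$ is the minimal number of translates of $B$, with centers in $A$, needed to cover $A$. (By a theorem of Pisier, for every $\alpha\in(0,2)$ every origin-symmetric convex body has a linear image satisfying the hypothesis with an absolute constant $c$.) *)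

theory Defs
  imports "HOL-Analysis.Analysis"
begin

definition convex_body :: "'a::euclidean_space set \<Rightarrow> bool" where
  "convex_body K \<longleftrightarrow> compact K \<and> convex K \<and> interior K \<noteq> {}"

definition origin_symmetric :: "'a::real_vector set \<Rightarrow> bool" where
  "origin_symmetric K \<longleftrightarrow> (\<forall>x\<in>K. - x \<in> K)"

definition minkowski_sum :: "'a::real_vector set \<Rightarrow> 'a set \<Rightarrow> 'a set" where
  "minkowski_sum A B = {a + b | a b. a \<in> A \<and> b \<in> B}"

definition dilate :: "real \<Rightarrow> 'a::real_vector set \<Rightarrow> 'a set" where
  "dilate t B = (\<lambda>x. t *\<^sub>R x) ` B"

definition covering_number :: "'a::real_vector set \<Rightarrow> 'a set \<Rightarrow> nat" where
  "covering_number A B =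
     (LEAST m. \<exists>C. finite C \<and> C \<subseteq> A \<and> card C = m \<and> A \<subseteq> (\<Union>x\<in>C. (\<lambda>y. x + y) ` B))"

end

theory Submission
  imports Defs
begin

text \<open>
  Cover K by N(K, tB) translates of tB; the convexity of B puts every point of K + tB into the
  corresponding translate of 2tB, so |K + tB| \<le> N(K, tB) (2t)^n |B|.  Conversely, covering B by
  N(B, rK) translates of rK with r = 1/(2 - \<alpha>) gives |B| \<le> N(B, rK) r^n |K|, and the hypothesis
  at scale r bounds N(B, rK) by e^{cn} because r^\<alpha> (2 - \<alpha>) \<ge> r (2 - \<alpha>) = 1.  Multiplying the two
  volume bounds and taking n-th roots yields the claim.
\<close>

lemma zero_in_interior_if_origin_symmetric:
  fixes K :: "'a::euclidean_space set"
  assumes "convex K" "origin_symmetric K" "interior K \<noteq> {}"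
  shows "0 \<in> interior K"
proof -
  obtain x where x: "x \<in> interior K" using assms(3) by blast
  have "uminus ` K = K"
    using assms(2) unfolding origin_symmetric_def by (auto intro: rev_image_eqI[of "- _"])
  moreover have "interior (uminus ` K) = uminus ` interior K"
    by (rule interior_injective_linear_image) (auto simp: linear_uminus)
  ultimately have "- x \<in> interior K" using x by (metis imageI)
  have "(1/2) *\<^sub>R x + (1/2) *\<^sub>R (- x) \<in> interior K"
    by (rule convexD[OF convex_interior[OF assms(1)] x \<open>- x \<in> interior K\<close>]) auto
  then show ?thesis by simp
qed

lemma zero_in_interior_dilate:
  fixes B :: "'a::euclidean_space set"
  assumes "0 \<in> interior B" "t > 0"
  shows "0 \<in> interior (dilate t B)"
proof -
  obtain e where e: "e > 0" "ball 0 e \<subseteq> B" using assms(1) unfolding mem_interior by blast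
  have "ball 0 (t * e) \<subseteq> dilate t B"
  proof
    fix z :: 'a assume "z \<in> ball 0 (t * e)"
    then have "(1/t) *\<^sub>R z \<in> B" using e assms(2) by (auto simp: norm_divide field_simps)
    moreover have "z = t *\<^sub>R ((1/t) *\<^sub>R z)" using assms(2) by simp
    ultimately show "z \<in> dilate t B" unfolding dilate_def by blast
  qed
  moreover have "t * e > 0" using e(1) assms(2) by simp
  ultimately show ?thesis unfolding mem_interior by blast
qed

lemma finite_translate_cover_of_compact:
  fixes S :: "'a::euclidean_space set"
  assumes "compact S" "0 \<in> interior B"
  shows "\<exists>C. finite C \<and> C \<subseteq> S \<and> S \<subseteq> (\<Union>x\<in>C. (\<lambda>y. x + y) ` B)"
proof -
  obtain e where e: "e > 0" "ball 0 e \<subseteq> B" using assms(2) unfolding mem_interior by blast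
  obtain C where C: "finite C" "C \<subseteq> S" "S \<subseteq> (\<Union>x\<in>C. ball x e)"
    using seq_compact_imp_totally_bounded[OF compact_imp_seq_compact[OF assms(1)], rule_format, OF e(1)]
    by (elim exE conjE) (rule that)
  have "ball x e \<subseteq> (\<lambda>y. x + y) ` B" for x
  proof
    fix z assume "z \<in> ball x e"
    then have "z - x \<in> ball 0 e" by (simp add: dist_norm norm_minus_commute)
    then have "z - x \<in> B" using e(2) by blast
    then show "z \<in> (\<lambda>y. x + y) ` B" by (rule rev_image_eqI) simp
  qed
  then have "S \<subseteq> (\<Union>x\<in>C. (\<lambda>y. x + y) ` B)"
    using C(3) by (meson UN_mono order_refl order_trans)
  then show ?thesis using C(1,2) by blast
qed

lemma optimal_translate_cover_of_compact:
  fixes S :: "'a::euclidean_space set"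
  assumes "compact S" "0 \<in> interior B"
  obtains C where "finite C" "C \<subseteq> S" "card C = covering_number S B"
    "S \<subseteq> (\<Union>x\<in>C. (\<lambda>y. x + y) ` B)"
proof -
  obtain C0 where "finite C0" "C0 \<subseteq> S" "S \<subseteq> (\<Union>x\<in>C0. (\<lambda>y. x + y) ` B)"
    using finite_translate_cover_of_compact[OF assms] by blast
  then have "\<exists>m C. finite C \<and> C \<subseteq> S \<and> card C = m \<and> S \<subseteq> (\<Union>x\<in>C. (\<lambda>y. x + y) ` B)"
    by (intro exI[of _ "card C0"] exI[of _ C0]) simp
  then have "\<exists>C. finite C \<and> C \<subseteq> S \<and> card C = covering_number S B
               \<and> S \<subseteq> (\<Union>x\<in>C. (\<lambda>y. x + y) ` B)"
    unfolding covering_number_def by (rule LeastI_ex)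
  then show ?thesis using that by blast
qed

lemma compact_dilate:
  fixes B :: "'a::real_normed_vector set"
  shows "compact B \<Longrightarrow> compact (dilate t B)"
  unfolding dilate_def by (rule compact_scaling)

lemma measure_dilate:
  fixes B :: "'a::euclidean_space set"
  shows "measure lebesgue (dilate t B) = \<bar>t\<bar> ^ DIM('a) * measure lebesgue B"
  using measure_lebesgue_affine[of t 0 B] by (simp add: dilate_def)

lemma measure_le_card_translate_cover:
  fixes B :: "'a::euclidean_space set"
  assumes C: "finite C" and cover: "S \<subseteq> (\<Union>x\<in>C. (\<lambda>y. x + y) ` B)"
    and S: "S \<in> sets lebesgue" and B: "compact B"
  shows "measure lebesgue S \<le> real (card C) * measure lebesgue B"
proof -
  have translate: "compact ((\<lambda>y. x + y) ` B)" for x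
    by (rule compact_translation[OF B])
  have "measure lebesgue S \<le> measure lebesgue (\<Union>x\<in>C. (\<lambda>y. x + y) ` B)"
    by (rule measure_mono_fmeasurable[OF cover S lmeasurable_compact[OF compact_UN[OF C translate]]])
  also have "\<dots> \<le> (\<Sum>x\<in>C. measure lebesgue ((\<lambda>y. x + y) ` B))"
    by (rule measure_UNION_le[OF C]) (rule fmeasurableD[OF lmeasurable_compact[OF translate]])
  also have "\<dots> = (\<Sum>x\<in>C. measure lebesgue B)"
  proof (rule sum.cong[OF refl])
    fix x
    have "(\<lambda>y. x + y) ` B = (\<lambda>y. 1 *\<^sub>R y + x) ` B" by (simp add: add.commute)
    then show "measure lebesgue ((\<lambda>y. x + y) ` B) = measure lebesgue B"
      using measure_lebesgue_affine[of 1 x B] by simp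
  qed
  finally show ?thesis by simp
qed

lemma measure_le_covering_number:
  fixes S B :: "'a::euclidean_space set"
  assumes "compact S" "compact B" "0 \<in> interior B"
  shows "measure lebesgue S \<le> real (covering_number S B) * measure lebesgue B"
proof -
  obtain C where C: "finite C" "C \<subseteq> S" "card C = covering_number S B"
      "S \<subseteq> (\<Union>x\<in>C. (\<lambda>y. x + y) ` B)"
    by (rule optimal_translate_cover_of_compact[OF assms(1,3)])
  have "measure lebesgue S \<le> real (card C) * measure lebesgue B"
    by (rule measure_le_card_translate_cover[OF C(1,4) fmeasurableD[OF lmeasurable_compact[OF assms(1)]] assms(2)])
  then show ?thesis by (simp only: C(3))
qed

lemma minkowski_sum_subset_double_translates:
  fixes B :: "'a::real_vector set"
  assumes "convex B" "K \<subseteq> (\<Union>x\<in>C. (\<lambda>y. x + y) ` dilate t B)"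
  shows "minkowski_sum K (dilate t B) \<subseteq> (\<Union>x\<in>C. (\<lambda>y. x + y) ` dilate (2 * t) B)"
proof
  fix z assume "z \<in> minkowski_sum K (dilate t B)"
  then obtain k b where z: "z = k + t *\<^sub>R b" "k \<in> K" "b \<in> B"
    unfolding minkowski_sum_def dilate_def by blast
  then obtain x b' where x: "x \<in> C" "b' \<in> B" "k = x + t *\<^sub>R b'"
    using assms(2) unfolding dilate_def by blast
  have "(1/2) *\<^sub>R b' + (1/2) *\<^sub>R b \<in> B"
    using convexD[OF assms(1) x(2) z(3)] by simp
  moreover have "z = x + (2 * t) *\<^sub>R ((1/2) *\<^sub>R b' + (1/2) *\<^sub>R b)"
    using z x by (simp add: algebra_simps)
  ultimately show "z \<in> (\<Union>x\<in>C. (\<lambda>y. x + y) ` dilate (2 * t) B)"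
    using x(1) unfolding dilate_def by blast
qed

lemma measure_minkowski_sum_le_covering_number:
  fixes K B :: "'a::euclidean_space set"
  assumes "compact K" "compact B" "convex B" "0 \<in> interior B" "t > 0"
  shows "measure lebesgue (minkowski_sum K (dilate t B))
           \<le> real (covering_number K (dilate t B)) * (2 * t) ^ DIM('a) * measure lebesgue B"
proof -
  obtain C where C: "finite C" "C \<subseteq> K" "card C = covering_number K (dilate t B)"
      "K \<subseteq> (\<Union>x\<in>C. (\<lambda>y. x + y) ` dilate t B)"
    by (rule optimal_translate_cover_of_compact[OF assms(1) zero_in_interior_dilate[OF assms(4,5)]])
  have "compact (minkowski_sum K (dilate t B))"
    unfolding minkowski_sum_def by (intro compact_sums assms(1) compact_dilate assms(2))
  then have "measure lebesgue (minkowski_sum K (dilate t B))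
               \<le> real (card C) * measure lebesgue (dilate (2 * t) B)"
    by (intro measure_le_card_translate_cover[OF C(1) minkowski_sum_subset_double_translates[OF assms(3) C(4)]]
        fmeasurableD lmeasurable_compact compact_dilate assms(2))
  then show ?thesis using assms(5) by (simp add: C(3) measure_dilate)
qed

lemma measure_minkowski_sum_le_covering_numbers:
  fixes K B :: "'a::euclidean_space set"
  assumes "compact K" "0 \<in> interior K" "compact B" "convex B" "0 \<in> interior B" "t > 0" "r > 0"
  shows "measure lebesgue (minkowski_sum K (dilate t B))
           \<le> real (covering_number K (dilate t B)) * real (covering_number B (dilate r K))
               * (2 * t * r) ^ DIM('a) * measure lebesgue K"
proof -
  have "measure lebesgue B \<le> real (covering_number B (dilate r K)) * measure lebesgue (dilate r K)"
    using assms by (intro measure_le_covering_number compact_dilate zero_in_interior_dilate)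
  also have "\<dots> = real (covering_number B (dilate r K)) * r ^ DIM('a) * measure lebesgue K"
    using assms(7) by (simp add: measure_dilate)
  finally have "measure lebesgue B \<le> \<dots>" .
  moreover have "measure lebesgue (minkowski_sum K (dilate t B))
      \<le> real (covering_number K (dilate t B)) * (2 * t) ^ DIM('a) * measure lebesgue B"
    using assms by (intro measure_minkowski_sum_le_covering_number)
  ultimately show ?thesis
    using assms(6) by (smt (verit) mult.assoc mult.commute mult_left_mono power_mult_distrib
        of_nat_0_le_iff zero_le_power)
qed

lemma one_le_inverse_powr_mult:
  fixes s \<alpha> :: real
  assumes "0 < s" "s \<le> 1" "1 \<le> \<alpha>"
  shows "1 \<le> (1 / s) powr \<alpha> * s"
proof -
  have "1 / s \<le> (1 / s) powr \<alpha>"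
    using assms powr_mono[of 1 \<alpha> "1 / s"] by simp
  then show ?thesis using assms(1) by (simp add: divide_le_eq)
qed

lemma powr_inverse_le_of_le_power:
  fixes x R :: real
  assumes "n > 0" "0 \<le> x" "0 \<le> R" "x \<le> R ^ n"
  shows "x powr (1 / real n) \<le> R"
proof -
  have "x powr (1 / real n) = root n x" using assms(1,2) by (simp add: root_powr_inverse)
  also have "\<dots> \<le> root n (R ^ n)" using assms(1,4) by (rule real_root_le_mono)
  also have "\<dots> = R" using assms(1,3) by (rule real_root_pos2)
  finally show ?thesis .
qed

theorem corollary2:
  fixes K :: "'a::euclidean_space set" and c \<alpha> :: real
  assumes "c > 0" and "1 \<le> \<alpha>" and "\<alpha> < 2"
    and "convex_body K" and "origin_symmetric K"
    and "\<forall>t\<ge>1. max (real (covering_number K (dilate t (cball 0 1))))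
                     (real (covering_number (cball 0 1) (dilate t K)))
               \<le> exp (c * real DIM('a) / (t powr \<alpha> * (2 - \<alpha>)))"
  shows "\<forall>t\<ge>1. measure lebesgue (minkowski_sum K (dilate t (cball 0 1))) powr (1 / real DIM('a))
           \<le> 2 * exp c * t * measure lebesgue K powr (1 / real DIM('a)) * (1 / (2 - \<alpha>))
               * exp (c / (t powr \<alpha> * (2 - \<alpha>)))"
proof (intro allI impI)
  fix t :: real assume t: "t \<ge> 1"
  define n where "n = DIM('a)"
  define r where "r = 1 / (2 - \<alpha>)"
  define B :: "'a set" where "B = cball 0 1"
  define M where "M = measure lebesgue K"
  define E where "E = exp (c / (t powr \<alpha> * (2 - \<alpha>)))"
  have n: "n > 0" and r: "r \<ge> 1" and M: "M \<ge> 0"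
    using assms(2,3) by (auto simp: n_def r_def M_def)
  have "c * n / (r powr \<alpha> * (2 - \<alpha>)) \<le> c * n / 1"
    using assms one_le_inverse_powr_mult[of "2 - \<alpha>" \<alpha>] by (intro divide_left_mono) (auto simp: r_def)
  then have "exp (c * n / (r powr \<alpha> * (2 - \<alpha>))) \<le> exp c ^ n"
    by (simp add: mult.commute flip: exp_of_nat_mult)
  moreover have "real (covering_number B (dilate r K)) \<le> exp (c * n / (r powr \<alpha> * (2 - \<alpha>)))"
    using assms(6)[rule_format, OF r] by (simp add: B_def n_def)
  ultimately have NB: "real (covering_number B (dilate r K)) \<le> exp c ^ n"
    by linarith
  have NK: "real (covering_number K (dilate t B)) \<le> E ^ n"
    using assms(6)[rule_format, OF t] by (simp add: B_def n_def E_def mult.commute flip: exp_of_nat_mult)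
  have "measure lebesgue (minkowski_sum K (dilate t B))
      \<le> real (covering_number K (dilate t B)) * real (covering_number B (dilate r K)) * (2 * t * r) ^ n * M"
    using assms(4,5) t r zero_in_interior_if_origin_symmetric[of K]
    by (intro measure_minkowski_sum_le_covering_numbers[of K B t r, folded n_def M_def])
       (auto simp: convex_body_def B_def)
  also have "\<dots> \<le> E ^ n * exp c ^ n * (2 * t * r) ^ n * M"
    using NK NB t r M by (intro mult_mono) auto
  also have "\<dots> = (2 * exp c * t * root n M * r * E) ^ n"
    using n M by (simp add: power_mult_distrib real_root_pow_pos2)
  finally have "measure lebesgue (minkowski_sum K (dilate t B)) powr (1 / real n)
      \<le> 2 * exp c * t * root n M * r * E"
    using M t r by (intro powr_inverse_le_of_le_power[OF n] mult_nonneg_nonneg real_root_ge_zero)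
      (auto simp: E_def)
  then show "measure lebesgue (minkowski_sum K (dilate t (cball 0 1))) powr (1 / real DIM('a))
           \<le> 2 * exp c * t * measure lebesgue K powr (1 / real DIM('a)) * (1 / (2 - \<alpha>))
               * exp (c / (t powr \<alpha> * (2 - \<alpha>)))"
    using n M by (simp add: B_def n_def M_def r_def E_def root_powr_inverse)
qed

end
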